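(* Let $\mathcal V$ be braided monoidal closed and complete, and let $A$ be a semi-Hopf $\mathcal V$-category with object set $X$ whose underlying $\mathcal V$-category is Frobenius. Then $\int^\ell_{A,x}\cong I$ in $\mathcal V$ for all $x\in X$. More precisely, if $(e,\nu)$ is a Frobenius system, the morphism $u_x\colon I\to\int^\ell_{A,x}$ induced by the left integral family $t^{yx}=(1\otimes\epsilon_{xy})\circ e^{yx}$ is an isomorphism with inverse $\nu_x\circ\tau_{xx}$.
   Context: $\mathcal V$: braided monoidal closed with all limits, tensor $\otimes$, unit $I$, braiding $\sigma$. A $\mathcal V$-category $A$ with object set $X$: objects $A_{x,y}$, compositions $m_{xyz}\colon A_{x,y}\otimes A_{y,z}\to A_{x,z}$, units $j_x\colon I\to A_{x,x}$, associative and unital. Semi-Hopf: each $A_{x,y}$ is a comonoid $(\delta_{xy},\epsilon_{xy})$ in $\mathcal V$ with all $m_{xyz},j_x$ comonoid morphisms. Casimir family: morphisms $e^{xy}\colon I\to A_{x,y}\otimes A_{y,x}$ with $(m_{zxy}\otimes1)\circ(1_{A_{z,x}}\otimes e^{xy})=(1\otimes m_{yzx})\circ(e^{zy}\otimes1_{A_{z,x}})$ for all $x,y,z$. A Frobenius system is a Casimir family $e$ together with morphisms $\nu_x\colon A_{x,x}\to I$ ($x\in X$) such that $(\nu_x\otimes1)\circ e^{xx}=j_x=(1\otimes\nu_x)\circ e^{xx}$. A $\mathcal V$-category is Frobenius if it admits a Frobenius system. Left integral space: for $z\in X$, $\int^\ell_{A,z}$ is the object with morphisms $\tau_{yz}\colon\int^\ell_{A,z}\to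 A_{y,z}$ ($y\in X$) satisfying $m_{xyz}\circ(1_{A_{x,y}}\otimes\tau_{yz})=\epsilon_{xy}\otimes\tau_{xz}$ for all $x,y$, universal among objects $W$ with families $w_y\colon W\to A_{y,z}$ satisfying the same equations (unique factorization). Morphisms $I\to\int^\ell_{A,z}$ thus correspond to families $t^{yz}\colon I\to A_{y,z}$ with $m_{xyz}\circ(1\otimes t^{yz})=t^{xz}\circ\epsilon_{xy}$. *)

theory Defs
  imports Main
begin

text \<open>A monoidal category with explicit coherence data. Objects are all elements
of type 'o; morphisms are the elements f of type 'm with mArr C f.
mComp C g f is the composite g after f.\<close>

record ('o, 'm) moncat =
  mArr :: "'m \<Rightarrow> bool"
  mDom :: "'m \<Rightarrow> 'o"
  mCod :: "'m \<Rightarrow> 'o"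
  mComp :: "'m \<Rightarrow> 'm \<Rightarrow> 'm"
  mId :: "'o \<Rightarrow> 'm"
  mTensO :: "'o \<Rightarrow> 'o \<Rightarrow> 'o"
  mTens :: "'m \<Rightarrow> 'm \<Rightarrow> 'm"
  mUnit :: 'o
  mAssoc :: "'o \<Rightarrow> 'o \<Rightarrow> 'o \<Rightarrow> 'm"
  mLu :: "'o \<Rightarrow> 'm"
  mRu :: "'o \<Rightarrow> 'm"
  mBraid :: "'o \<Rightarrow> 'o \<Rightarrow> 'm"

definition hom :: "('o, 'm) moncat \<Rightarrow> 'm \<Rightarrow> 'o \<Rightarrow> 'o \<Rightarrow> bool" where
  "hom C f a b \<longleftrightarrow> mArr C f \<and> mDom C f = a \<and> mCod C f = b"

definition inverse_pair :: "('o, 'm) moncat \<Rightarrow> 'm \<Rightarrow> 'm \<Rightarrow> bool" where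
  "inverse_pair C f g \<longleftrightarrow> hom C f (mDom C f) (mCod C f) \<and> hom C g (mCod C f) (mDom C f)
     \<and> mComp C g f = mId C (mDom C f) \<and> mComp C f g = mId C (mCod C f)"

definition is_iso :: "('o, 'm) moncat \<Rightarrow> 'm \<Rightarrow> bool" where
  "is_iso C f \<longleftrightarrow> (\<exists>g. inverse_pair C f g)"

definition mInv :: "('o, 'm) moncat \<Rightarrow> 'm \<Rightarrow> 'm" where
  "mInv C f = (SOME g. inverse_pair C f g)"

definition category :: "('o, 'm) moncat \<Rightarrow> bool" where
  "category C \<longleftrightarrow>
     (\<forall>a. hom C (mId C a) a a)
   \<and> (\<forall>f. mArr C f \<longrightarrow> mComp C (mId C (mCod C f)) f = f \<and> mComp C f (mId C (mDom C f)) = f)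
   \<and> (\<forall>f g. mArr C f \<and> mArr C g \<and> mCod C f = mDom C g \<longrightarrow>
          hom C (mComp C g f) (mDom C f) (mCod C g))
   \<and> (\<forall>f g h. mArr C f \<and> mArr C g \<and> mArr C h \<and> mCod C f = mDom C g \<and> mCod C g = mDom C h \<longrightarrow>
          mComp C h (mComp C g f) = mComp C (mComp C h g) f)"

definition monoidal_category :: "('o, 'm) moncat \<Rightarrow> bool" where
  "monoidal_category C \<longleftrightarrow> category C
   \<comment> \<open>tensor is a bifunctor\<close>
   \<and> (\<forall>f g. mArr C f \<and> mArr C g \<longrightarrow>
        hom C (mTens C f g) (mTensO C (mDom C f) (mDom C g)) (mTensO C (mCod C f) (mCod C g)))
   \<and> (\<forall>a b. mTens C (mId C a) (mId C b) = mId C (mTensO C a b))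
   \<and> (\<forall>f g h k. mArr C f \<and> mArr C g \<and> mArr C h \<and> mArr C k \<and> mCod C f = mDom C g \<and> mCod C h = mDom C k
        \<longrightarrow> mTens C (mComp C g f) (mComp C k h) = mComp C (mTens C g k) (mTens C f h))
   \<comment> \<open>associator: natural isomorphism\<close>
   \<and> (\<forall>a b c. hom C (mAssoc C a b c) (mTensO C (mTensO C a b) c) (mTensO C a (mTensO C b c))
                \<and> is_iso C (mAssoc C a b c))
   \<and> (\<forall>f g h. mArr C f \<and> mArr C g \<and> mArr C h \<longrightarrow>
        mComp C (mAssoc C (mCod C f) (mCod C g) (mCod C h)) (mTens C (mTens C f g) h)
        = mComp C (mTens C f (mTens C g h)) (mAssoc C (mDom C f) (mDom C g) (mDom C h)))
   \<comment> \<open>left and right unitors: natural isomorphisms\<close>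
   \<and> (\<forall>a. hom C (mLu C a) (mTensO C (mUnit C) a) a \<and> is_iso C (mLu C a))
   \<and> (\<forall>a. hom C (mRu C a) (mTensO C a (mUnit C)) a \<and> is_iso C (mRu C a))
   \<and> (\<forall>f. mArr C f \<longrightarrow>
        mComp C (mLu C (mCod C f)) (mTens C (mId C (mUnit C)) f) = mComp C f (mLu C (mDom C f)))
   \<and> (\<forall>f. mArr C f \<longrightarrow>
        mComp C (mRu C (mCod C f)) (mTens C f (mId C (mUnit C))) = mComp C f (mRu C (mDom C f)))
   \<comment> \<open>pentagon\<close>
   \<and> (\<forall>a b c d.
        mComp C (mAssoc C a b (mTensO C c d)) (mAssoc C (mTensO C a b) c d)
        = mComp C (mTens C (mId C a) (mAssoc C b c d))
            (mComp C (mAssoc C a (mTensO C b c) d) (mTens C (mAssoc C a b c) (mId C d))))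
   \<comment> \<open>triangle\<close>
   \<and> (\<forall>a b. mComp C (mTens C (mId C a) (mLu C b)) (mAssoc C a (mUnit C) b)
             = mTens C (mRu C a) (mId C b))"

definition braided_monoidal_category :: "('o, 'm) moncat \<Rightarrow> bool" where
  "braided_monoidal_category C \<longleftrightarrow> monoidal_category C
   \<and> (\<forall>a b. hom C (mBraid C a b) (mTensO C a b) (mTensO C b a) \<and> is_iso C (mBraid C a b))
   \<and> (\<forall>f g. mArr C f \<and> mArr C g \<longrightarrow>
        mComp C (mBraid C (mCod C f) (mCod C g)) (mTens C f g)
        = mComp C (mTens C g f) (mBraid C (mDom C f) (mDom C g)))
   \<comment> \<open>hexagons\<close>
   \<and> (\<forall>a b c.
        mComp C (mAssoc C b c a) (mComp C (mBraid C a (mTensO C b c)) (mAssoc C a b c))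
        = mComp C (mTens C (mId C b) (mBraid C a c))
            (mComp C (mAssoc C b a c) (mTens C (mBraid C a b) (mId C c))))
   \<and> (\<forall>a b c.
        mComp C (mInv C (mAssoc C c a b)) (mComp C (mBraid C (mTensO C a b) c) (mInv C (mAssoc C a b c)))
        = mComp C (mTens C (mBraid C a c) (mId C b))
            (mComp C (mInv C (mAssoc C a c b)) (mTens C (mId C a) (mBraid C b c))))"

text \<open>Closedness: each functor (-) tensor b has a right adjoint, given by internal homs
with evaluation morphisms.\<close>

definition monoidal_closed :: "('o, 'm) moncat \<Rightarrow> bool" where
  "monoidal_closed C \<longleftrightarrow>
     (\<forall>b c. \<exists>h ev. hom C ev (mTensO C h b) c
        \<and> (\<forall>a f. hom C f (mTensO C a b) c \<longrightarrow>
              (\<exists>!g. hom C g a h \<and> mComp C ev (mTens C g (mId C b)) = f)))"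

definition braided_monoidal_closed :: "('o, 'm) moncat \<Rightarrow> bool" where
  "braided_monoidal_closed C \<longleftrightarrow> braided_monoidal_category C \<and> monoidal_closed C"

definition comonoid :: "('o, 'm) moncat \<Rightarrow> 'o \<Rightarrow> 'm \<Rightarrow> 'm \<Rightarrow> bool" where
  "comonoid C c d e \<longleftrightarrow>
     hom C d c (mTensO C c c) \<and> hom C e c (mUnit C)
   \<and> mComp C (mAssoc C c c c) (mComp C (mTens C d (mId C c)) d) = mComp C (mTens C (mId C c) d) d
   \<and> mComp C (mLu C c) (mComp C (mTens C e (mId C c)) d) = mId C c
   \<and> mComp C (mRu C c) (mComp C (mTens C (mId C c) e) d) = mId C c"

definition comonoid_hom :: "('o, 'm) moncat \<Rightarrow> 'm \<Rightarrow> 'm \<Rightarrow> 'm \<Rightarrow> 'm \<Rightarrow> 'm \<Rightarrow> bool" where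
  "comonoid_hom C f d e d' e' \<longleftrightarrow>
     mComp C d' f = mComp C (mTens C f f) d \<and> mComp C e' f = e"

text \<open>Tensor product comonoid structure on a tensor b (uses the braiding).\<close>

definition tens_comult :: "('o, 'm) moncat \<Rightarrow> 'o \<Rightarrow> 'o \<Rightarrow> 'm \<Rightarrow> 'm \<Rightarrow> 'm" where
  "tens_comult C a b da db =
     mComp C (mInv C (mAssoc C a b (mTensO C a b)))
     (mComp C (mTens C (mId C a) (mAssoc C b a b))
     (mComp C (mTens C (mId C a) (mTens C (mBraid C a b) (mId C b)))
     (mComp C (mTens C (mId C a) (mInv C (mAssoc C a b b)))
     (mComp C (mAssoc C a a (mTensO C b b))
       (mTens C da db)))))"

definition tens_counit :: "('o, 'm) moncat \<Rightarrow> 'm \<Rightarrow> 'm \<Rightarrow> 'm" where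
  "tens_counit C ea eb = mComp C (mLu C (mUnit C)) (mTens C ea eb)"

definition vcategory :: "('o, 'm) moncat \<Rightarrow> 'x set \<Rightarrow> ('x \<Rightarrow> 'x \<Rightarrow> 'o)
    \<Rightarrow> ('x \<Rightarrow> 'x \<Rightarrow> 'x \<Rightarrow> 'm) \<Rightarrow> ('x \<Rightarrow> 'm) \<Rightarrow> bool" where
  "vcategory C X A m j \<longleftrightarrow>
     (\<forall>x\<in>X. \<forall>y\<in>X. \<forall>z\<in>X. hom C (m x y z) (mTensO C (A x y) (A y z)) (A x z))
   \<and> (\<forall>x\<in>X. hom C (j x) (mUnit C) (A x x))
   \<and> (\<forall>x\<in>X. \<forall>y\<in>X. \<forall>z\<in>X. \<forall>w\<in>X.
        mComp C (m x z w) (mTens C (m x y z) (mId C (A z w)))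
        = mComp C (m x y w) (mComp C (mTens C (mId C (A x y)) (m y z w)) (mAssoc C (A x y) (A y z) (A z w))))
   \<and> (\<forall>x\<in>X. \<forall>y\<in>X. mComp C (m x x y) (mTens C (j x) (mId C (A x y))) = mLu C (A x y))
   \<and> (\<forall>x\<in>X. \<forall>y\<in>X. mComp C (m x y y) (mTens C (mId C (A x y)) (j y)) = mRu C (A x y))"

definition semi_hopf_vcategory :: "('o, 'm) moncat \<Rightarrow> 'x set \<Rightarrow> ('x \<Rightarrow> 'x \<Rightarrow> 'o)
    \<Rightarrow> ('x \<Rightarrow> 'x \<Rightarrow> 'x \<Rightarrow> 'm) \<Rightarrow> ('x \<Rightarrow> 'm) \<Rightarrow> ('x \<Rightarrow> 'x \<Rightarrow> 'm) \<Rightarrow> ('x \<Rightarrow> 'x \<Rightarrow> 'm) \<Rightarrow> bool" where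
  "semi_hopf_vcategory C X A m j \<delta> \<epsilon> \<longleftrightarrow> vcategory C X A m j
   \<and> (\<forall>x\<in>X. \<forall>y\<in>X. comonoid C (A x y) (\<delta> x y) (\<epsilon> x y))
   \<and> (\<forall>x\<in>X. \<forall>y\<in>X. \<forall>z\<in>X.
        comonoid_hom C (m x y z)
          (tens_comult C (A x y) (A y z) (\<delta> x y) (\<delta> y z)) (tens_counit C (\<epsilon> x y) (\<epsilon> y z))
          (\<delta> x z) (\<epsilon> x z))
   \<and> (\<forall>x\<in>X. comonoid_hom C (j x) (mInv C (mLu C (mUnit C))) (mId C (mUnit C)) (\<delta> x x) (\<epsilon> x x))"

definition casimir_family :: "('o, 'm) moncat \<Rightarrow> 'x set \<Rightarrow> ('x \<Rightarrow> 'x \<Rightarrow> 'o)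
    \<Rightarrow> ('x \<Rightarrow> 'x \<Rightarrow> 'x \<Rightarrow> 'm) \<Rightarrow> ('x \<Rightarrow> 'x \<Rightarrow> 'm) \<Rightarrow> bool" where
  "casimir_family C X A m e \<longleftrightarrow>
     (\<forall>x\<in>X. \<forall>y\<in>X. hom C (e x y) (mUnit C) (mTensO C (A x y) (A y x)))
   \<and> (\<forall>x\<in>X. \<forall>y\<in>X. \<forall>z\<in>X.
        mComp C (mTens C (m z x y) (mId C (A y x)))
          (mComp C (mInv C (mAssoc C (A z x) (A x y) (A y x)))
          (mComp C (mTens C (mId C (A z x)) (e x y)) (mInv C (mRu C (A z x)))))
        = mComp C (mTens C (mId C (A z y)) (m y z x))
          (mComp C (mAssoc C (A z y) (A y z) (A z x))
          (mComp C (mTens C (e z y) (mId C (A z x))) (mInv C (mLu C (A z x))))))"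

definition frobenius_system :: "('o, 'm) moncat \<Rightarrow> 'x set \<Rightarrow> ('x \<Rightarrow> 'x \<Rightarrow> 'o)
    \<Rightarrow> ('x \<Rightarrow> 'x \<Rightarrow> 'x \<Rightarrow> 'm) \<Rightarrow> ('x \<Rightarrow> 'm) \<Rightarrow> ('x \<Rightarrow> 'x \<Rightarrow> 'm) \<Rightarrow> ('x \<Rightarrow> 'm) \<Rightarrow> bool" where
  "frobenius_system C X A m j e \<nu> \<longleftrightarrow> casimir_family C X A m e
   \<and> (\<forall>x\<in>X. hom C (\<nu> x) (A x x) (mUnit C))
   \<and> (\<forall>x\<in>X. mComp C (mLu C (A x x)) (mComp C (mTens C (\<nu> x) (mId C (A x x))) (e x x)) = j x)
   \<and> (\<forall>x\<in>X. mComp C (mRu C (A x x)) (mComp C (mTens C (mId C (A x x)) (\<nu> x)) (e x x)) = j x)"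

definition left_integral_cond :: "('o, 'm) moncat \<Rightarrow> 'x set \<Rightarrow> ('x \<Rightarrow> 'x \<Rightarrow> 'o)
    \<Rightarrow> ('x \<Rightarrow> 'x \<Rightarrow> 'x \<Rightarrow> 'm) \<Rightarrow> ('x \<Rightarrow> 'x \<Rightarrow> 'm) \<Rightarrow> 'x \<Rightarrow> 'o \<Rightarrow> ('x \<Rightarrow> 'm) \<Rightarrow> bool" where
  "left_integral_cond C X A m \<epsilon> z W w \<longleftrightarrow>
     (\<forall>y\<in>X. hom C (w y) W (A y z))
   \<and> (\<forall>x\<in>X. \<forall>y\<in>X.
        mComp C (m x y z) (mTens C (mId C (A x y)) (w y))
        = mComp C (mLu C (A x z)) (mTens C (\<epsilon> x y) (w x)))"

definition left_integral_space :: "('o, 'm) moncat \<Rightarrow> 'x set \<Rightarrow> ('x \<Rightarrow> 'x \<Rightarrow> 'o)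
    \<Rightarrow> ('x \<Rightarrow> 'x \<Rightarrow> 'x \<Rightarrow> 'm) \<Rightarrow> ('x \<Rightarrow> 'x \<Rightarrow> 'm) \<Rightarrow> 'x \<Rightarrow> 'o \<Rightarrow> ('x \<Rightarrow> 'm) \<Rightarrow> bool" where
  "left_integral_space C X A m \<epsilon> z Intg \<tau> \<longleftrightarrow>
     left_integral_cond C X A m \<epsilon> z Intg \<tau>
   \<and> (\<forall>W w. left_integral_cond C X A m \<epsilon> z W w \<longrightarrow>
        (\<exists>!h. hom C h W Intg \<and> (\<forall>y\<in>X. mComp C (\<tau> y) h = w y)))"

end

theory Submission
  imports Defs
begin

text \<open>Contracting the right leg of the Casimir element \<open>e\<^sup>y\<^sup>x\<close> with \<open>\<epsilon>\<^sub>x\<^sub>y\<close> gives morphisms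
\<open>t\<^sup>y\<^sup>x : I \<rightarrow> A\<^sub>y\<^sub>,\<^sub>x\<close>. The Casimir property moves the composition \<open>m\<close> across \<open>e\<close>, and
multiplicativity of \<open>\<epsilon>\<close> then shows that \<open>t\<close> is a left integral family; one Frobenius identity
together with \<open>\<epsilon>\<^sub>x\<^sub>x \<circ> j\<^sub>x = 1\<close> gives \<open>\<nu>\<^sub>x \<circ> t\<^sup>x\<^sup>x = 1\<close>. Conversely, inserting the other Frobenius
identity \<open>(1 \<otimes> \<nu>\<^sub>x) \<circ> e\<^sup>x\<^sup>x = j\<^sub>x\<close> in front of any left integral family \<open>w\<close> and moving \<open>m\<close> across \<open>e\<close>
again, the integral equation yields \<open>w\<^sub>y = t\<^sup>y\<^sup>x \<circ> \<nu>\<^sub>x \<circ> w\<^sub>x\<close>. Applied to the universal family \<open>\<tau>\<close>,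
this makes \<open>u\<^sub>x \<circ> \<nu>\<^sub>x \<circ> \<tau>\<^sub>x\<^sub>x\<close> an endomorphism of the integral space fixing \<open>\<tau>\<close>, hence the identity.\<close>

locale monoidal_cat =
  fixes C :: "('o, 'm) moncat"
  assumes monoidal: "monoidal_category C"
begin

abbreviation "Arr \<equiv> mArr C"
abbreviation "Dom \<equiv> mDom C"
abbreviation "Cod \<equiv> mCod C"
abbreviation compose (infixr "\<cdot>" 55) where "g \<cdot> f \<equiv> mComp C g f"
abbreviation tensor (infixr "\<otimes>" 65) where "f \<otimes> g \<equiv> mTens C f g"
abbreviation "Idm \<equiv> mId C"
abbreviation "TO \<equiv> mTensO C"
abbreviation "U \<equiv> mUnit C"
abbreviation "As \<equiv> mAssoc C"
abbreviation "Lu \<equiv> mLu C"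
abbreviation "Ru \<equiv> mRu C"
abbreviation "Ai a b c \<equiv> mInv C (mAssoc C a b c)"
abbreviation "Lui a \<equiv> mInv C (mLu C a)"
abbreviation "Rui a \<equiv> mInv C (mRu C a)"

lemma category: "category C"
  using monoidal unfolding monoidal_category_def by blast

lemma id_typing [simp]: "Arr (Idm a)" "Dom (Idm a) = a" "Cod (Idm a) = a"
  using category unfolding category_def hom_def by auto

lemma comp_typing [simp]:
  assumes "Arr f" "Arr g" "Dom g = Cod f"
  shows "Arr (g \<cdot> f)" "Dom (g \<cdot> f) = Dom f" "Cod (g \<cdot> f) = Cod g"
  using category assms unfolding category_def hom_def by auto

lemma comp_id_left [simp]: "Arr f \<Longrightarrow> Cod f = a \<Longrightarrow> Idm a \<cdot> f = f"
  using category unfolding category_def by auto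

lemma comp_id_right [simp]: "Arr f \<Longrightarrow> Dom f = a \<Longrightarrow> f \<cdot> Idm a = f"
  using category unfolding category_def by auto

lemma comp_assoc [simp]:
  "Arr f \<Longrightarrow> Arr g \<Longrightarrow> Arr h \<Longrightarrow> Dom g = Cod f \<Longrightarrow> Dom h = Cod g \<Longrightarrow>
   (h \<cdot> g) \<cdot> f = h \<cdot> (g \<cdot> f)"
  using category unfolding category_def by metis

lemma comp_eq_precomp:
  "g \<cdot> f = r \<Longrightarrow> Arr X \<Longrightarrow> Cod X = Dom f \<Longrightarrow> Arr f \<Longrightarrow> Arr g \<Longrightarrow> Dom g = Cod f
   \<Longrightarrow> g \<cdot> f \<cdot> X = r \<cdot> X"
  by (metis comp_assoc)

lemma inverse_pair_cancel_left:
  assumes "inverse_pair C f g" "Arr h\<^sub>1" "Arr h\<^sub>2" "Cod h\<^sub>1 = Dom f" "Cod h\<^sub>2 = Dom f"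
    and "f \<cdot> h\<^sub>1 = f \<cdot> h\<^sub>2"
  shows "h\<^sub>1 = h\<^sub>2"
proof -
  have g: "Arr g" "Dom g = Cod f" "g \<cdot> f = Idm (Dom f)" and "Arr f"
    using assms(1) unfolding inverse_pair_def hom_def by auto
  then have "h\<^sub>1 = g \<cdot> f \<cdot> h\<^sub>1" using assms(2,4) by (simp flip: comp_assoc)
  also have "\<dots> = g \<cdot> f \<cdot> h\<^sub>2" using assms(6) by simp
  also have "\<dots> = h\<^sub>2" using g \<open>Arr f\<close> assms(3,5) by (simp flip: comp_assoc)
  finally show ?thesis .
qed

lemma inverse_pair_cancel_right:
  assumes "inverse_pair C f g" "Arr h\<^sub>1" "Arr h\<^sub>2" "Dom h\<^sub>1 = Cod f" "Dom h\<^sub>2 = Cod f"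
    and "h\<^sub>1 \<cdot> f = h\<^sub>2 \<cdot> f"
  shows "h\<^sub>1 = h\<^sub>2"
proof -
  have g: "Arr g" "Cod g = Dom f" "f \<cdot> g = Idm (Cod f)" and "Arr f" "Dom g = Cod f"
    using assms(1) unfolding inverse_pair_def hom_def by auto
  then have "h\<^sub>1 = (h\<^sub>1 \<cdot> f) \<cdot> g" using assms(2,4) by simp
  also have "\<dots> = (h\<^sub>2 \<cdot> f) \<cdot> g" using assms(6) by simp
  also have "\<dots> = h\<^sub>2" using g \<open>Arr f\<close> \<open>Dom g = Cod f\<close> assms(3,5) by simp
  finally show ?thesis .
qed

lemma tensor_typing [simp]:
  assumes "Arr f" "Arr g"
  shows "Arr (f \<otimes> g)" "Dom (f \<otimes> g) = TO (Dom f) (Dom g)" "Cod (f \<otimes> g) = TO (Cod f) (Cod g)"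
  using monoidal assms unfolding monoidal_category_def hom_def by auto

lemma tensor_id [simp]: "Idm a \<otimes> Idm b = Idm (TO a b)"
  using monoidal unfolding monoidal_category_def by auto

lemma interchange:
  "Arr f \<Longrightarrow> Arr g \<Longrightarrow> Arr h \<Longrightarrow> Arr k \<Longrightarrow> Cod f = Dom g \<Longrightarrow> Cod h = Dom k
   \<Longrightarrow> (g \<cdot> f) \<otimes> (k \<cdot> h) = (g \<otimes> k) \<cdot> (f \<otimes> h)"
  using monoidal unfolding monoidal_category_def by auto

lemma As_iso: "inverse_pair C (As a b c) (Ai a b c)"
  and Lu_iso: "inverse_pair C (Lu a) (Lui a)"
  and Ru_iso: "inverse_pair C (Ru a) (Rui a)"
  using monoidal unfolding monoidal_category_def is_iso_def mInv_def by (auto intro: someI_ex)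

lemma As_typing [simp]: "Arr (As a b c)" "Dom (As a b c) = TO (TO a b) c" "Cod (As a b c) = TO a (TO b c)"
  and Lu_typing [simp]: "Arr (Lu a)" "Dom (Lu a) = TO U a" "Cod (Lu a) = a"
  and Ru_typing [simp]: "Arr (Ru a)" "Dom (Ru a) = TO a U" "Cod (Ru a) = a"
  using monoidal unfolding monoidal_category_def hom_def by auto

lemma Ai_typing [simp]: "Arr (Ai a b c)" "Dom (Ai a b c) = TO a (TO b c)" "Cod (Ai a b c) = TO (TO a b) c"
  and Lui_typing [simp]: "Arr (Lui a)" "Dom (Lui a) = a" "Cod (Lui a) = TO U a"
  and Rui_typing [simp]: "Arr (Rui a)" "Dom (Rui a) = a" "Cod (Rui a) = TO a U"
  using As_iso[of a b c] Lu_iso[of a] Ru_iso[of a] unfolding inverse_pair_def hom_def by auto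

lemma As_inverse [simp]: "Ai a b c \<cdot> As a b c = Idm (TO (TO a b) c)" "As a b c \<cdot> Ai a b c = Idm (TO a (TO b c))"
  and Lu_inverse [simp]: "Lui a \<cdot> Lu a = Idm (TO U a)" "Lu a \<cdot> Lui a = Idm a"
  and Ru_inverse [simp]: "Rui a \<cdot> Ru a = Idm (TO a U)" "Ru a \<cdot> Rui a = Idm a"
  using As_iso[of a b c] Lu_iso[of a] Ru_iso[of a] unfolding inverse_pair_def by auto

lemma As_inverse_comp [simp]:
  "Arr f \<Longrightarrow> Cod f = TO (TO a b) c \<Longrightarrow> Ai a b c \<cdot> As a b c \<cdot> f = f"
  "Arr f \<Longrightarrow> Cod f = TO a (TO b c) \<Longrightarrow> As a b c \<cdot> Ai a b c \<cdot> f = f"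
  and Lu_inverse_comp [simp]:
  "Arr f \<Longrightarrow> Cod f = TO U a \<Longrightarrow> Lui a \<cdot> Lu a \<cdot> f = f"
  "Arr f \<Longrightarrow> Cod f = a \<Longrightarrow> Lu a \<cdot> Lui a \<cdot> f = f"
  and Ru_inverse_comp [simp]:
  "Arr f \<Longrightarrow> Cod f = TO a U \<Longrightarrow> Rui a \<cdot> Ru a \<cdot> f = f"
  "Arr f \<Longrightarrow> Cod f = a \<Longrightarrow> Ru a \<cdot> Rui a \<cdot> f = f"
  by (simp_all flip: comp_assoc)

lemma As_natural:
  "Arr f \<Longrightarrow> Arr g \<Longrightarrow> Arr h \<Longrightarrow>
   As (Cod f) (Cod g) (Cod h) \<cdot> ((f \<otimes> g) \<otimes> h) = (f \<otimes> (g \<otimes> h)) \<cdot> As (Dom f) (Dom g) (Dom h)"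
  using monoidal unfolding monoidal_category_def by auto

lemma Lu_natural: "Arr f \<Longrightarrow> Lu (Cod f) \<cdot> (Idm U \<otimes> f) = f \<cdot> Lu (Dom f)"
  using monoidal unfolding monoidal_category_def by auto

lemma Ru_natural: "Arr f \<Longrightarrow> Ru (Cod f) \<cdot> (f \<otimes> Idm U) = f \<cdot> Ru (Dom f)"
  using monoidal unfolding monoidal_category_def by auto

lemma pentagon:
  "As a b (TO c d) \<cdot> As (TO a b) c d = (Idm a \<otimes> As b c d) \<cdot> As a (TO b c) d \<cdot> (As a b c \<otimes> Idm d)"
  using monoidal unfolding monoidal_category_def by auto

lemma triangle: "(Idm a \<otimes> Lu b) \<cdot> As a U b = Ru a \<otimes> Idm b"
  using monoidal unfolding monoidal_category_def by auto

lemma Ai_natural: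
  assumes "Arr f" "Arr g" "Arr h"
  shows "((f \<otimes> g) \<otimes> h) \<cdot> Ai (Dom f) (Dom g) (Dom h) = Ai (Cod f) (Cod g) (Cod h) \<cdot> (f \<otimes> (g \<otimes> h))"
proof (rule inverse_pair_cancel_left[OF As_iso])
  show "As (Cod f) (Cod g) (Cod h) \<cdot> ((f \<otimes> g) \<otimes> h) \<cdot> Ai (Dom f) (Dom g) (Dom h)
      = As (Cod f) (Cod g) (Cod h) \<cdot> Ai (Cod f) (Cod g) (Cod h) \<cdot> (f \<otimes> (g \<otimes> h))"
    using comp_eq_precomp[OF As_natural[OF assms], of "Ai (Dom f) (Dom g) (Dom h)"] assms by simp
qed (use assms in simp_all)

lemma Lui_natural:
  assumes "Arr f"
  shows "Lui (Cod f) \<cdot> f = (Idm U \<otimes> f) \<cdot> Lui (Dom f)"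
proof (rule inverse_pair_cancel_left[OF Lu_iso])
  show "Lu (Cod f) \<cdot> Lui (Cod f) \<cdot> f = Lu (Cod f) \<cdot> (Idm U \<otimes> f) \<cdot> Lui (Dom f)"
    using comp_eq_precomp[OF Lu_natural[OF assms], of "Lui (Dom f)"] assms by simp
qed (use assms in simp_all)

lemma tensor_unit_right_cancel:
  assumes "Arr f" "Arr g" "Dom f = Dom g" "Cod f = Cod g" "f \<otimes> Idm U = g \<otimes> Idm U"
  shows "f = g"
  using Ru_natural[of f] Ru_natural[of g] assms
  by (intro inverse_pair_cancel_right[OF Ru_iso, of f g "Dom f"]) auto

lemma tensor_unit_left_cancel:
  assumes "Arr f" "Arr g" "Dom f = Dom g" "Cod f = Cod g" "Idm U \<otimes> f = Idm U \<otimes> g"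
  shows "f = g"
  using Lu_natural[of f] Lu_natural[of g] assms
  by (intro inverse_pair_cancel_right[OF Lu_iso, of f g "Dom f"]) auto

lemma tensor_eq_whiskers_rl:
  "Arr f \<Longrightarrow> Arr g \<Longrightarrow> Dom f = a \<Longrightarrow> Cod g = b \<Longrightarrow> (f \<otimes> Idm b) \<cdot> (Idm a \<otimes> g) = f \<otimes> g"
  using interchange[of "Idm a" f g "Idm b"] by simp

lemma tensor_eq_whiskers_lr:
  "Arr f \<Longrightarrow> Arr g \<Longrightarrow> Cod f = b \<Longrightarrow> Dom g = a \<Longrightarrow> (Idm b \<otimes> g) \<cdot> (f \<otimes> Idm a) = f \<otimes> g"
  using interchange[of f "Idm b" "Idm a" g] by simp

lemma tensor_eq_whiskers_rl_comp:
  "Arr f \<Longrightarrow> Arr g \<Longrightarrow> Dom f = a \<Longrightarrow> Cod g = b \<Longrightarrow> Arr h \<Longrightarrow> Cod h = TO a (Dom g) \<Longrightarrow>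
   (f \<otimes> Idm b) \<cdot> (Idm a \<otimes> g) \<cdot> h = (f \<otimes> g) \<cdot> h"
  by (rule comp_eq_precomp[OF tensor_eq_whiskers_rl]) simp_all

lemma tensor_eq_whiskers_lr_comp:
  "Arr f \<Longrightarrow> Arr g \<Longrightarrow> Cod f = b \<Longrightarrow> Dom g = a \<Longrightarrow> Arr h \<Longrightarrow> Cod h = TO (Dom f) a \<Longrightarrow>
   (Idm b \<otimes> g) \<cdot> (f \<otimes> Idm a) \<cdot> h = (f \<otimes> g) \<cdot> h"
  by (rule comp_eq_precomp[OF tensor_eq_whiskers_lr]) simp_all

lemma whisker_left_comp [simp]:
  "Arr f \<Longrightarrow> Arr g \<Longrightarrow> Dom f = Cod g \<Longrightarrow> (Idm a \<otimes> f) \<cdot> (Idm a \<otimes> g) = Idm a \<otimes> (f \<cdot> g)"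
  using interchange[of "Idm a" "Idm a" g f] by simp

lemma whisker_right_comp [simp]:
  "Arr f \<Longrightarrow> Arr g \<Longrightarrow> Dom f = Cod g \<Longrightarrow> (f \<otimes> Idm a) \<cdot> (g \<otimes> Idm a) = (f \<cdot> g) \<otimes> Idm a"
  using interchange[of g f "Idm a" "Idm a"] by simp

lemma whisker_left_comp_comp [simp]:
  "Arr f \<Longrightarrow> Arr g \<Longrightarrow> Dom f = Cod g \<Longrightarrow> Arr h \<Longrightarrow> Cod h = TO a (Dom g) \<Longrightarrow>
   (Idm a \<otimes> f) \<cdot> (Idm a \<otimes> g) \<cdot> h = (Idm a \<otimes> (f \<cdot> g)) \<cdot> h"
  by (rule comp_eq_precomp[OF whisker_left_comp]) simp_all

lemma whisker_right_comp_comp [simp]: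
  "Arr f \<Longrightarrow> Arr g \<Longrightarrow> Dom f = Cod g \<Longrightarrow> Arr h \<Longrightarrow> Cod h = TO (Dom g) a \<Longrightarrow>
   (f \<otimes> Idm a) \<cdot> (g \<otimes> Idm a) \<cdot> h = ((f \<cdot> g) \<otimes> Idm a) \<cdot> h"
  by (rule comp_eq_precomp[OF whisker_right_comp]) simp_all

text \<open>Kelly's consequences of the pentagon and triangle axioms.\<close>

lemma Ru_tensor_assoc: "(Idm b \<otimes> Ru a) \<cdot> As b a U = Ru (TO b a)"
proof -
  have "As b a U \<cdot> (Ru (TO b a) \<otimes> Idm U) = As b a U \<cdot> (Idm (TO b a) \<otimes> Lu U) \<cdot> As (TO b a) U U"
    by (simp add: triangle)
  also have "\<dots> = (Idm b \<otimes> (Idm a \<otimes> Lu U)) \<cdot> As b a (TO U U) \<cdot> As (TO b a) U U"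
    using comp_eq_precomp[OF As_natural[of "Idm b" "Idm a" "Lu U"], of "As (TO b a) U U"] by simp
  also have "\<dots> = (Idm b \<otimes> (Idm a \<otimes> Lu U)) \<cdot> (Idm b \<otimes> As a U U) \<cdot> As b (TO a U) U \<cdot> (As b a U \<otimes> Idm U)"
    by (simp add: pentagon)
  also have "\<dots> = (Idm b \<otimes> (Ru a \<otimes> Idm U)) \<cdot> As b (TO a U) U \<cdot> (As b a U \<otimes> Idm U)"
    by (simp add: triangle)
  also have "\<dots> = As b a U \<cdot> ((Idm b \<otimes> Ru a) \<otimes> Idm U) \<cdot> (As b a U \<otimes> Idm U)"
    using comp_eq_precomp[OF As_natural[of "Idm b" "Ru a" "Idm U", symmetric]] by simp
  also have "\<dots> = As b a U \<cdot> (((Idm b \<otimes> Ru a) \<cdot> As b a U) \<otimes> Idm U)"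
    by simp
  finally have "Ru (TO b a) \<otimes> Idm U = ((Idm b \<otimes> Ru a) \<cdot> As b a U) \<otimes> Idm U"
    by (rule inverse_pair_cancel_left[OF As_iso, rotated 4]) simp_all
  then show ?thesis
    by (rule tensor_unit_right_cancel[symmetric, rotated 4]) simp_all
qed

lemma Ru_tensor_assoc_inv: "Ru (TO b a) \<cdot> Ai b a U = Idm b \<otimes> Ru a"
  by (rule inverse_pair_cancel_right[OF As_iso[of b a U]]) (simp_all flip: Ru_tensor_assoc)

lemma Ru_tensor_unit: "Ru (TO a U) = Ru a \<otimes> Idm U"
  by (rule inverse_pair_cancel_left[OF Ru_iso[of a]])
    (simp_all add: Ru_natural[of "Ru a", simplified])

lemma Lu_unit_eq_Ru_unit: "Lu U = Ru U"
proof -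
  have "(Idm U \<otimes> Ru U) \<cdot> As U U U = (Idm U \<otimes> Lu U) \<cdot> As U U U"
    by (simp add: Ru_tensor_assoc Ru_tensor_unit triangle)
  then have "Idm U \<otimes> Ru U = Idm U \<otimes> Lu U"
    by (rule inverse_pair_cancel_right[OF As_iso, rotated 4]) simp_all
  then show ?thesis
    by (rule tensor_unit_left_cancel[symmetric, rotated 4]) simp_all
qed

lemma scalar_tensor_point:
  assumes "Arr f" "Dom f = a" "Cod f = U" "Arr t" "Dom t = U" "Cod t = b"
  shows "Lu b \<cdot> (f \<otimes> t) = t \<cdot> f \<cdot> Ru a"
proof -
  have "t \<cdot> f \<cdot> Ru a = t \<cdot> Lu U \<cdot> (f \<otimes> Idm U)"
    using Ru_natural[of f] assms by (simp add: Lu_unit_eq_Ru_unit)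
  also have "\<dots> = Lu b \<cdot> (Idm U \<otimes> t) \<cdot> (f \<otimes> Idm U)"
    using comp_eq_precomp[OF Lu_natural[of t], of "f \<otimes> Idm U"] assms by simp
  also have "\<dots> = Lu b \<cdot> (f \<otimes> t)"
    using assms by (simp add: tensor_eq_whiskers_lr)
  finally show ?thesis by simp
qed

lemma contract_both_legs:
  assumes "Arr e" "Dom e = U" "Cod e = TO a b"
    and "Arr f" "Dom f = a" "Cod f = U" "Arr g" "Dom g = b" "Cod g = U"
  shows "f \<cdot> Ru a \<cdot> (Idm a \<otimes> g) \<cdot> e = g \<cdot> Lu b \<cdot> (f \<otimes> Idm b) \<cdot> e"
proof -
  have "f \<cdot> Ru a \<cdot> (Idm a \<otimes> g) \<cdot> e = Ru U \<cdot> (f \<otimes> Idm U) \<cdot> (Idm a \<otimes> g) \<cdot> e"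
    using comp_eq_precomp[OF Ru_natural[of f, symmetric], of "(Idm a \<otimes> g) \<cdot> e"] assms by simp
  also have "\<dots> = Ru U \<cdot> (f \<otimes> g) \<cdot> e"
    using assms by (simp add: tensor_eq_whiskers_rl_comp)
  also have "\<dots> = Lu U \<cdot> (Idm U \<otimes> g) \<cdot> (f \<otimes> Idm b) \<cdot> e"
    using assms by (simp add: tensor_eq_whiskers_lr_comp Lu_unit_eq_Ru_unit)
  also have "\<dots> = g \<cdot> Lu b \<cdot> (f \<otimes> Idm b) \<cdot> e"
    using comp_eq_precomp[OF Lu_natural[of g], of "(f \<otimes> Idm b) \<cdot> e"] assms by simp
  finally show ?thesis .
qed

lemma contract_right_interchange:
  assumes "Arr n" "Dom n = TO r b" "Cod n = p" "Arr f" "Dom f = c" "Cod f = U"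
    and "Arr e" "Dom e = U" "Cod e = TO b c"
  shows "Ru p \<cdot> (Idm p \<otimes> f) \<cdot> (n \<otimes> Idm c) \<cdot> Ai r b c \<cdot> (Idm r \<otimes> e) \<cdot> Rui r
    = n \<cdot> (Idm r \<otimes> (Ru b \<cdot> (Idm b \<otimes> f) \<cdot> e)) \<cdot> Rui r"
proof -
  have "Ru p \<cdot> (Idm p \<otimes> f) \<cdot> (n \<otimes> Idm c) \<cdot> Ai r b c \<cdot> (Idm r \<otimes> e) \<cdot> Rui r
     = Ru p \<cdot> (n \<otimes> Idm U) \<cdot> (Idm (TO r b) \<otimes> f) \<cdot> Ai r b c \<cdot> (Idm r \<otimes> e) \<cdot> Rui r"
    using assms by (simp add: tensor_eq_whiskers_lr_comp tensor_eq_whiskers_rl_comp)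
  also have "\<dots> = n \<cdot> Ru (TO r b) \<cdot> (Idm (TO r b) \<otimes> f) \<cdot> Ai r b c \<cdot> (Idm r \<otimes> e) \<cdot> Rui r"
    using comp_eq_precomp[OF Ru_natural[of n]] assms by simp
  also have "\<dots> = n \<cdot> Ru (TO r b) \<cdot> Ai r b U \<cdot> (Idm r \<otimes> (Idm b \<otimes> f)) \<cdot> (Idm r \<otimes> e) \<cdot> Rui r"
    using comp_eq_precomp[OF Ai_natural[of "Idm r" "Idm b" f], of "(Idm r \<otimes> e) \<cdot> Rui r"] assms
    by simp
  also have "\<dots> = n \<cdot> (Idm r \<otimes> Ru b) \<cdot> (Idm r \<otimes> (Idm b \<otimes> f)) \<cdot> (Idm r \<otimes> e) \<cdot> Rui r"
    using comp_eq_precomp[OF Ru_tensor_assoc_inv[of r b]] assms by simp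
  also have "\<dots> = n \<cdot> (Idm r \<otimes> (Ru b \<cdot> (Idm b \<otimes> f) \<cdot> e)) \<cdot> Rui r"
    using assms by simp
  finally show ?thesis .
qed

lemma contract_right_scalar:
  assumes "Arr e" "Dom e = U" "Cod e = TO p q" "Arr g" "Dom g = q" "Cod g = U"
    and "Arr h" "Dom h = T" "Cod h = U"
  shows "Ru p \<cdot> (Idm p \<otimes> (Lu U \<cdot> (g \<otimes> h))) \<cdot> As p q T \<cdot> (e \<otimes> Idm T) \<cdot> Lui T
    = Ru p \<cdot> (Idm p \<otimes> g) \<cdot> e \<cdot> h"
proof -
  have gh: "Lu U \<cdot> (g \<otimes> h) = g \<cdot> Ru q \<cdot> (Idm q \<otimes> h)"
    using comp_eq_precomp[OF Ru_natural[of g], of "Idm q \<otimes> h"] assms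
    by (simp add: Lu_unit_eq_Ru_unit tensor_eq_whiskers_rl)
  have "Ru p \<cdot> (Idm p \<otimes> (Lu U \<cdot> (g \<otimes> h))) \<cdot> As p q T \<cdot> (e \<otimes> Idm T) \<cdot> Lui T
    = Ru p \<cdot> (Idm p \<otimes> g) \<cdot> (Idm p \<otimes> Ru q) \<cdot> (Idm p \<otimes> (Idm q \<otimes> h)) \<cdot> As p q T \<cdot> (e \<otimes> Idm T) \<cdot> Lui T"
    using assms by (simp add: gh)
  also have "\<dots> = Ru p \<cdot> (Idm p \<otimes> g) \<cdot> (Idm p \<otimes> Ru q) \<cdot> As p q U \<cdot> (Idm (TO p q) \<otimes> h) \<cdot> (e \<otimes> Idm T) \<cdot> Lui T"
    using comp_eq_precomp[OF As_natural[of "Idm p" "Idm q" h, symmetric], of "(e \<otimes> Idm T) \<cdot> Lui T"] assms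
    by simp
  also have "\<dots> = Ru p \<cdot> (Idm p \<otimes> g) \<cdot> Ru (TO p q) \<cdot> (e \<otimes> Idm U) \<cdot> (Idm U \<otimes> h) \<cdot> Lui T"
    using comp_eq_precomp[OF Ru_tensor_assoc[of p q], of "(Idm (TO p q) \<otimes> h) \<cdot> (e \<otimes> Idm T) \<cdot> Lui T"] assms
    by (simp add: tensor_eq_whiskers_lr_comp tensor_eq_whiskers_rl_comp)
  also have "\<dots> = Ru p \<cdot> (Idm p \<otimes> g) \<cdot> e \<cdot> Lu U \<cdot> (Idm U \<otimes> h) \<cdot> Lui T"
    using comp_eq_precomp[OF Ru_natural[of e], of "(Idm U \<otimes> h) \<cdot> Lui T"] assms
    by (simp add: Lu_unit_eq_Ru_unit)
  also have "\<dots> = Ru p \<cdot> (Idm p \<otimes> g) \<cdot> e \<cdot> h"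
    using comp_eq_precomp[OF Lu_natural[of h], of "Lui T"] assms by simp
  finally show ?thesis .
qed

lemma left_integral_space_endo_eq_id:
  assumes space: "left_integral_space C X A m \<epsilon> z T \<tau>"
    and h: "hom C h T T" "\<forall>y\<in>X. \<tau> y \<cdot> h = \<tau> y"
  shows "h = Idm T"
proof -
  have "left_integral_cond C X A m \<epsilon> z T \<tau>"
    using space unfolding left_integral_space_def by blast
  then have "\<forall>y\<in>X. \<tau> y \<cdot> Idm T = \<tau> y"
    unfolding left_integral_cond_def hom_def by simp
  with h space show ?thesis
    unfolding left_integral_space_def by (metis hom_def id_typing)
qed

end

locale frobenius_counital_vcategory = monoidal_cat C
  for C :: "('o, 'm) moncat" +
  fixes X :: "'x set" and A :: "'x \<Rightarrow> 'x \<Rightarrow> 'o"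
    and m :: "'x \<Rightarrow> 'x \<Rightarrow> 'x \<Rightarrow> 'm" and j :: "'x \<Rightarrow> 'm"
    and e :: "'x \<Rightarrow> 'x \<Rightarrow> 'm" and \<nu> :: "'x \<Rightarrow> 'm" and \<epsilon> :: "'x \<Rightarrow> 'x \<Rightarrow> 'm"
  assumes vcategory: "vcategory C X A m j"
    and frobenius: "frobenius_system C X A m j e \<nu>"
    and counit_hom: "\<And>x y. x \<in> X \<Longrightarrow> y \<in> X \<Longrightarrow> hom C (\<epsilon> x y) (A x y) U"
    and counit_comp: "\<And>x y z. x \<in> X \<Longrightarrow> y \<in> X \<Longrightarrow> z \<in> X \<Longrightarrow>
      \<epsilon> x z \<cdot> m x y z = Lu U \<cdot> (\<epsilon> x y \<otimes> \<epsilon> y z)"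
    and counit_unit: "\<And>x. x \<in> X \<Longrightarrow> \<epsilon> x x \<cdot> j x = Idm U"
begin

lemma mult_typing [simp]:
  "x \<in> X \<Longrightarrow> y \<in> X \<Longrightarrow> z \<in> X \<Longrightarrow> Arr (m x y z)"
  "x \<in> X \<Longrightarrow> y \<in> X \<Longrightarrow> z \<in> X \<Longrightarrow> Dom (m x y z) = TO (A x y) (A y z)"
  "x \<in> X \<Longrightarrow> y \<in> X \<Longrightarrow> z \<in> X \<Longrightarrow> Cod (m x y z) = A x z"
  using vcategory unfolding vcategory_def hom_def by auto

lemma unit_typing [simp]:
  "x \<in> X \<Longrightarrow> Arr (j x)" "x \<in> X \<Longrightarrow> Dom (j x) = U" "x \<in> X \<Longrightarrow> Cod (j x) = A x x"
  using vcategory unfolding vcategory_def hom_def by auto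

lemma mult_unit_right: "x \<in> X \<Longrightarrow> y \<in> X \<Longrightarrow> m x y y \<cdot> (Idm (A x y) \<otimes> j y) = Ru (A x y)"
  using vcategory unfolding vcategory_def by auto

lemma counit_typing [simp]:
  "x \<in> X \<Longrightarrow> y \<in> X \<Longrightarrow> Arr (\<epsilon> x y)"
  "x \<in> X \<Longrightarrow> y \<in> X \<Longrightarrow> Dom (\<epsilon> x y) = A x y"
  "x \<in> X \<Longrightarrow> y \<in> X \<Longrightarrow> Cod (\<epsilon> x y) = U"
  using counit_hom unfolding hom_def by auto

lemma casimir_typing [simp]:
  "x \<in> X \<Longrightarrow> y \<in> X \<Longrightarrow> Arr (e x y)"
  "x \<in> X \<Longrightarrow> y \<in> X \<Longrightarrow> Dom (e x y) = U"
  "x \<in> X \<Longrightarrow> y \<in> X \<Longrightarrow> Cod (e x y) = TO (A x y) (A y x)"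
  using frobenius unfolding frobenius_system_def casimir_family_def hom_def by auto

lemma casimir_equation:
  "x \<in> X \<Longrightarrow> y \<in> X \<Longrightarrow> z \<in> X \<Longrightarrow>
   (m z x y \<otimes> Idm (A y x)) \<cdot> Ai (A z x) (A x y) (A y x) \<cdot> (Idm (A z x) \<otimes> e x y) \<cdot> Rui (A z x)
   = (Idm (A z y) \<otimes> m y z x) \<cdot> As (A z y) (A y z) (A z x) \<cdot> (e z y \<otimes> Idm (A z x)) \<cdot> Lui (A z x)"
  using frobenius unfolding frobenius_system_def casimir_family_def by auto

lemma frobenius_form_typing [simp]:
  "x \<in> X \<Longrightarrow> Arr (\<nu> x)" "x \<in> X \<Longrightarrow> Dom (\<nu> x) = A x x" "x \<in> X \<Longrightarrow> Cod (\<nu> x) = U"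
  using frobenius unfolding frobenius_system_def hom_def by auto

lemma frobenius_left: "x \<in> X \<Longrightarrow> Lu (A x x) \<cdot> (\<nu> x \<otimes> Idm (A x x)) \<cdot> e x x = j x"
  and frobenius_right: "x \<in> X \<Longrightarrow> Ru (A x x) \<cdot> (Idm (A x x) \<otimes> \<nu> x) \<cdot> e x x = j x"
  using frobenius unfolding frobenius_system_def by auto

definition casimir_integral :: "'x \<Rightarrow> 'x \<Rightarrow> 'm" where
  "casimir_integral y x = Ru (A y x) \<cdot> (Idm (A y x) \<otimes> \<epsilon> x y) \<cdot> e y x"

lemma casimir_integral_typing [simp]:
  "x \<in> X \<Longrightarrow> y \<in> X \<Longrightarrow> Arr (casimir_integral y x)"
  "x \<in> X \<Longrightarrow> y \<in> X \<Longrightarrow> Dom (casimir_integral y x) = U"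
  "x \<in> X \<Longrightarrow> y \<in> X \<Longrightarrow> Cod (casimir_integral y x) = A y x"
  unfolding casimir_integral_def by simp_all

lemma counit_casimir_integral:
  assumes "x \<in> X"
  shows "\<nu> x \<cdot> casimir_integral x x = Idm U"
  using contract_both_legs[of "e x x" "A x x" "A x x" "\<nu> x" "\<epsilon> x x"] assms
  by (simp add: casimir_integral_def frobenius_left counit_unit)

lemma casimir_integral_mult:
  assumes "x \<in> X" "y \<in> X" "w \<in> X"
  shows "m w y x \<cdot> (Idm (A w y) \<otimes> casimir_integral y x) \<cdot> Rui (A w y)
    = casimir_integral w x \<cdot> \<epsilon> w y"
proof -
  have "m w y x \<cdot> (Idm (A w y) \<otimes> casimir_integral y x) \<cdot> Rui (A w y)
      = Ru (A w x) \<cdot> (Idm (A w x) \<otimes> \<epsilon> x y) \<cdot> (m w y x \<otimes> Idm (A x y))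
          \<cdot> Ai (A w y) (A y x) (A x y) \<cdot> (Idm (A w y) \<otimes> e y x) \<cdot> Rui (A w y)"
    unfolding casimir_integral_def using assms by (subst contract_right_interchange) simp_all
  also have "\<dots> = Ru (A w x) \<cdot> (Idm (A w x) \<otimes> \<epsilon> x y) \<cdot> (Idm (A w x) \<otimes> m x w y)
          \<cdot> As (A w x) (A x w) (A w y) \<cdot> (e w x \<otimes> Idm (A w y)) \<cdot> Lui (A w y)"
    using assms by (simp only: casimir_equation)
  also have "\<dots> = Ru (A w x) \<cdot> (Idm (A w x) \<otimes> (Lu U \<cdot> (\<epsilon> x w \<otimes> \<epsilon> w y)))
          \<cdot> As (A w x) (A x w) (A w y) \<cdot> (e w x \<otimes> Idm (A w y)) \<cdot> Lui (A w y)"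
    using assms by (simp add: counit_comp)
  also have "\<dots> = casimir_integral w x \<cdot> \<epsilon> w y"
    unfolding casimir_integral_def using assms by (subst contract_right_scalar) simp_all
  finally show ?thesis .
qed

lemma casimir_integral_left_integral:
  assumes "x \<in> X"
  shows "left_integral_cond C X A m \<epsilon> x U (\<lambda>y. casimir_integral y x)"
  unfolding left_integral_cond_def
proof (intro conjI ballI)
  fix y assume "y \<in> X"
  with assms show "hom C (casimir_integral y x) U (A y x)"
    unfolding hom_def by simp
next
  fix w y assume "w \<in> X" "y \<in> X"
  with assms have "m w y x \<cdot> (Idm (A w y) \<otimes> casimir_integral y x)
      = (m w y x \<cdot> (Idm (A w y) \<otimes> casimir_integral y x) \<cdot> Rui (A w y)) \<cdot> Ru (A w y)"
    by simp
  also have "\<dots> = Lu (A w x) \<cdot> (\<epsilon> w y \<otimes> casimir_integral w x)"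
    using assms \<open>w \<in> X\<close> \<open>y \<in> X\<close> by (simp add: casimir_integral_mult scalar_tensor_point)
  finally show "m w y x \<cdot> (Idm (A w y) \<otimes> casimir_integral y x)
      = Lu (A w x) \<cdot> (\<epsilon> w y \<otimes> casimir_integral w x)" .
qed

lemma frobenius_right_mult:
  assumes "x \<in> X" "y \<in> X"
  shows "Ru (A y x) \<cdot> (Idm (A y x) \<otimes> \<nu> x) \<cdot> (m y x x \<otimes> Idm (A x x))
      \<cdot> Ai (A y x) (A x x) (A x x) \<cdot> (Idm (A y x) \<otimes> e x x) \<cdot> Rui (A y x) = Idm (A y x)"
  using assms comp_eq_precomp[OF mult_unit_right[of y x], of "Rui (A y x)"]
  by (subst contract_right_interchange) (simp_all add: frobenius_right)

lemma left_integral_factorization: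
  assumes "x \<in> X" "y \<in> X" and w: "left_integral_cond C X A m \<epsilon> x W w"
  shows "casimir_integral y x \<cdot> \<nu> x \<cdot> w x = w y"
proof -
  have w_typing [simp]: "Arr (w z)" "Dom (w z) = W" "Cod (w z) = A z x" if "z \<in> X" for z
    using w that unfolding left_integral_cond_def hom_def by auto
  have w_integral: "m x y x \<cdot> (Idm (A x y) \<otimes> w y) = Lu (A x x) \<cdot> (\<epsilon> x y \<otimes> w x)"
    using w assms unfolding left_integral_cond_def by auto
  note ctx = assms(1,2)
  let ?b = "A y x" and ?c = "A x y" and ?a = "A x x"
  have "w y = Ru ?b \<cdot> (Idm ?b \<otimes> \<nu> x) \<cdot> (m y x x \<otimes> Idm ?a) \<cdot> Ai ?b ?a ?a
      \<cdot> (Idm ?b \<otimes> e x x) \<cdot> Rui ?b \<cdot> w y"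
    using comp_eq_precomp[OF frobenius_right_mult[OF ctx], of "w y"] ctx by simp
  also have "\<dots> = Ru ?b \<cdot> (Idm ?b \<otimes> \<nu> x) \<cdot> (Idm ?b \<otimes> m x y x) \<cdot> As ?b ?c ?b
      \<cdot> (e y x \<otimes> Idm ?b) \<cdot> Lui ?b \<cdot> w y"
    using ctx arg_cong[OF casimir_equation[of x x y], of "\<lambda>f. Ru ?b \<cdot> (Idm ?b \<otimes> \<nu> x) \<cdot> f \<cdot> w y"]
    by simp
  also have "\<dots> = Ru ?b \<cdot> (Idm ?b \<otimes> (\<nu> x \<cdot> m x y x)) \<cdot> As ?b ?c ?b
      \<cdot> (Idm (TO ?b ?c) \<otimes> w y) \<cdot> (e y x \<otimes> Idm W) \<cdot> Lui W"
    using ctx Lui_natural[of "w y"]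
    by (simp add: tensor_eq_whiskers_rl_comp tensor_eq_whiskers_lr_comp)
  also have "\<dots> = Ru ?b \<cdot> (Idm ?b \<otimes> (\<nu> x \<cdot> m x y x)) \<cdot> (Idm ?b \<otimes> (Idm ?c \<otimes> w y))
      \<cdot> As ?b ?c W \<cdot> (e y x \<otimes> Idm W) \<cdot> Lui W"
    using ctx comp_eq_precomp[OF As_natural[of "Idm ?b" "Idm ?c" "w y"], of "(e y x \<otimes> Idm W) \<cdot> Lui W"]
    by simp
  also have "\<dots> = Ru ?b \<cdot> (Idm ?b \<otimes> (\<nu> x \<cdot> Lu ?a \<cdot> (\<epsilon> x y \<otimes> w x)))
      \<cdot> As ?b ?c W \<cdot> (e y x \<otimes> Idm W) \<cdot> Lui W"
    using ctx w_integral by simp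
  also have "\<dots> = Ru ?b \<cdot> (Idm ?b \<otimes> (Lu U \<cdot> (\<epsilon> x y \<otimes> (\<nu> x \<cdot> w x))))
      \<cdot> As ?b ?c W \<cdot> (e y x \<otimes> Idm W) \<cdot> Lui W"
    using ctx comp_eq_precomp[OF Lu_natural[of "\<nu> x"], of "\<epsilon> x y \<otimes> w x"]
      interchange[of "\<epsilon> x y" "Idm U" "w x" "\<nu> x"]
    by simp
  also have "\<dots> = casimir_integral y x \<cdot> \<nu> x \<cdot> w x"
    unfolding casimir_integral_def using ctx by (subst contract_right_scalar) simp_all
  finally show ?thesis by simp
qed

lemma left_integral_space_iso_unit:
  assumes x: "x \<in> X" and space: "left_integral_space C X A m \<epsilon> x T \<tau>"
  shows "(\<exists>u. hom C u U T \<and> (\<forall>y\<in>X. \<tau> y \<cdot> u = casimir_integral y x))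
    \<and> (\<forall>u. hom C u U T \<and> (\<forall>y\<in>X. \<tau> y \<cdot> u = casimir_integral y x)
        \<longrightarrow> (\<nu> x \<cdot> \<tau> x) \<cdot> u = Idm U \<and> u \<cdot> (\<nu> x \<cdot> \<tau> x) = Idm T)"
proof (intro conjI allI impI; (elim conjE)?)
  have \<tau>: "left_integral_cond C X A m \<epsilon> x T \<tau>"
    using space unfolding left_integral_space_def by blast
  then have \<tau>_typing [simp]: "Arr (\<tau> y)" "Dom (\<tau> y) = T" "Cod (\<tau> y) = A y x" if "y \<in> X" for y
    using that unfolding left_integral_cond_def hom_def by auto
  show "\<exists>u. hom C u U T \<and> (\<forall>y\<in>X. \<tau> y \<cdot> u = casimir_integral y x)"
    using space casimir_integral_left_integral[OF x] unfolding left_integral_space_def by blast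
  fix u assume u: "hom C u U T" and \<tau>u: "\<forall>y\<in>X. \<tau> y \<cdot> u = casimir_integral y x"
  then show "(\<nu> x \<cdot> \<tau> x) \<cdot> u = Idm U"
    using x counit_casimir_integral[OF x] unfolding hom_def by simp
  have "\<forall>y\<in>X. \<tau> y \<cdot> u \<cdot> \<nu> x \<cdot> \<tau> x = \<tau> y"
    using u \<tau>u x left_integral_factorization[OF x _ \<tau>] unfolding hom_def by (simp flip: comp_assoc)
  then show "u \<cdot> (\<nu> x \<cdot> \<tau> x) = Idm T"
    using u x by (intro left_integral_space_endo_eq_id[OF space]) (auto simp: hom_def)
qed

end

lemma semi_hopf_frobenius_counital_vcategory:
  assumes "monoidal_category C"
    and "semi_hopf_vcategory C X A m j \<delta> \<epsilon>"
    and "frobenius_system C X A m j e \<nu>"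
  shows "frobenius_counital_vcategory C X A m j e \<nu> \<epsilon>"
  using assms unfolding frobenius_counital_vcategory_def frobenius_counital_vcategory_axioms_def
    monoidal_cat_def semi_hopf_vcategory_def comonoid_def comonoid_hom_def tens_counit_def
  by auto

theorem mainTheorem5:
  fixes C :: "('o, 'm) moncat" and X :: "'x set" and A :: "'x \<Rightarrow> 'x \<Rightarrow> 'o"
    and m :: "'x \<Rightarrow> 'x \<Rightarrow> 'x \<Rightarrow> 'm" and j :: "'x \<Rightarrow> 'm"
    and \<delta> \<epsilon> :: "'x \<Rightarrow> 'x \<Rightarrow> 'm"
    and e :: "'x \<Rightarrow> 'x \<Rightarrow> 'm" and \<nu> :: "'x \<Rightarrow> 'm"
    and Intg :: "'x \<Rightarrow> 'o" and \<tau> :: "'x \<Rightarrow> 'x \<Rightarrow> 'm"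
  assumes "braided_monoidal_closed C"
    and "semi_hopf_vcategory C X A m j \<delta> \<epsilon>"
    and "frobenius_system C X A m j e \<nu>"
    and "\<forall>z\<in>X. left_integral_space C X A m \<epsilon> z (Intg z) (\<lambda>y. \<tau> y z)"
  shows "\<forall>x\<in>X.
     (\<exists>u. hom C u (mUnit C) (Intg x)
          \<and> (\<forall>y\<in>X. mComp C (\<tau> y x) u
                    = mComp C (mRu C (A y x)) (mComp C (mTens C (mId C (A y x)) (\<epsilon> x y)) (e y x))))
   \<and> (\<forall>u. hom C u (mUnit C) (Intg x)
          \<and> (\<forall>y\<in>X. mComp C (\<tau> y x) u
                    = mComp C (mRu C (A y x)) (mComp C (mTens C (mId C (A y x)) (\<epsilon> x y)) (e y x)))
        \<longrightarrow> mComp C (mComp C (\<nu> x) (\<tau> x x)) u = mId C (mUnit C)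
          \<and> mComp C u (mComp C (\<nu> x) (\<tau> x x)) = mId C (Intg x))"
proof -
  interpret frobenius_counital_vcategory C X A m j e \<nu> \<epsilon>
    using assms(1-3) semi_hopf_frobenius_counital_vcategory
    unfolding braided_monoidal_closed_def braided_monoidal_category_def by blast
  show ?thesis
    using assms(4) left_integral_space_iso_unit unfolding casimir_integral_def by blast
qed

end
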